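(* Let $\lambda_1,\lambda_2,\alpha>0$ and $\theta\in[-1,1]$. Let $(X_1,X_2)$ have joint pdf $$f(x_1,x_2)=\left\{1+\theta\left[1-2e^{-\lambda_1x_1}\right]\left[1-2e^{-\lambda_2x_2}\right]\right\}\lambda_1e^{-\lambda_1x_1}\lambda_2e^{-\lambda_2x_2},\qquad x_1,x_2>0$$ (exponential marginals with rates $\lambda_1,\lambda_2$ coupled by the Farlie–Gumbel–Morgenstern copula $C(u,v)=uv\{1+\theta(1-u)(1-v)\}$). Then $$P(\alpha X_1>X_2)=\frac{\lambda_2\alpha}{\lambda_1+\lambda_2\alpha}+\theta\lambda_1\left[\frac{2}{2\lambda_1+\lambda_2\alpha}+\frac{1}{\lambda_1+2\lambda_2\alpha}-\frac{2}{\lambda_1+\lambda_2\alpha}\right],$$ and the conditional pdf of $X=X_1\mid\alpha X_1>X_2$ is, for $x>0$, $$f^{w}(x;\lambda_1,\lambda_2,\alpha,\theta)=K\,e^{-\lambda_1x}\left(1-e^{-\lambda_2\alpha x}\right)\left[1-\theta e^{-\lambda_2\alpha x}\left(1-2e^{-\lambda_1x}\right)\right],\qquad K=\frac{\lambda_1}{P(\alpha X_1>X_2)}.$$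
   Context: The distribution with this pdf $f^w$ is called the Generalized Weighted Exponential Distribution (GWED) with parameters $\lambda_1,\lambda_2,\alpha>0$, $\theta\in[-1,1]$. *)

theory Defs
  imports "HOL-Probability.Probability"
begin

definition fgm_exp_pdf :: "real \<Rightarrow> real \<Rightarrow> real \<Rightarrow> real \<times> real \<Rightarrow> real" where
  "fgm_exp_pdf l1 l2 th = (\<lambda>(x1, x2).
     if x1 > 0 \<and> x2 > 0 then
       (1 + th * (1 - 2 * exp (- l1 * x1)) * (1 - 2 * exp (- l2 * x2)))
         * (l1 * exp (- l1 * x1)) * (l2 * exp (- l2 * x2))
     else 0)"

definition gwed_prob :: "real \<Rightarrow> real \<Rightarrow> real \<Rightarrow> real \<Rightarrow> real" where
  "gwed_prob l1 l2 a th =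
     l2 * a / (l1 + l2 * a)
     + th * l1 * (2 / (2 * l1 + l2 * a) + 1 / (l1 + 2 * l2 * a) - 2 / (l1 + l2 * a))"

definition gwed_pdf :: "real \<Rightarrow> real \<Rightarrow> real \<Rightarrow> real \<Rightarrow> real \<Rightarrow> real" where
  "gwed_pdf l1 l2 a th x =
     (if x > 0 then
        (l1 / gwed_prob l1 l2 a th) * exp (- l1 * x) * (1 - exp (- l2 * a * x))
          * (1 - th * exp (- l2 * a * x) * (1 - 2 * exp (- l1 * x)))
      else 0)"

end

(* By Tonelli, P(X1 \<in> B, a X1 > X2) is the integral over B of the subdensity obtained by
   integrating the joint density f(x, y) over 0 < y < a x, an elementary integral of exponentials.
   Integrating the subdensity once more over (0, \<infinity>) gives P(a X1 > X2), and conditioning on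
   that event divides the subdensity by this probability, which yields the GWED density. *)

theory Submission
  imports Defs "HOL-Real_Asymp.Real_Asymp"
begin

lemma tendsto_exp_neg_mult_at_top:
  fixes k :: real
  assumes "k > 0"
  shows "((\<lambda>x. exp (- k * x)) \<longlongrightarrow> 0) at_top"
  using assms by real_asymp

lemma emeasure_fst_in_below_line:
  fixes X1 X2 :: "'s \<Rightarrow> real" and a :: real
  assumes D: "distributed M (lborel \<Otimes>\<^sub>M lborel) (\<lambda>\<omega>. (X1 \<omega>, X2 \<omega>)) f"
    and B: "B \<in> sets borel"
  shows "emeasure M {\<omega> \<in> space M. X1 \<omega> \<in> B \<and> X2 \<omega> < a * X1 \<omega>}
    = (\<integral>\<^sup>+x. (\<integral>\<^sup>+y. f (x, y) * indicator {..<a * x} y \<partial>lborel) * indicator B x \<partial>lborel)"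
proof -
  define S where "S = {p :: real \<times> real. fst p \<in> B \<and> snd p < a * fst p}"
  have [measurable]: "f \<in> borel_measurable (lborel \<Otimes>\<^sub>M lborel)" "B \<in> sets lborel"
    using distributed_borel_measurable[OF D] B by auto
  have S[measurable]: "S \<in> sets (lborel \<Otimes>\<^sub>M lborel)"
  proof -
    have "Measurable.pred (lborel \<Otimes>\<^sub>M lborel) (\<lambda>p::real \<times> real. fst p \<in> B \<and> snd p < a * fst p)"
      by measurable
    then show ?thesis unfolding S_def pred_def by (simp add: space_pair_measure)
  qed
  have "{\<omega> \<in> space M. X1 \<omega> \<in> B \<and> X2 \<omega> < a * X1 \<omega>} = (\<lambda>\<omega>. (X1 \<omega>, X2 \<omega>)) -` S \<inter> space M"
    by (auto simp: S_def)
  then have "emeasure M {\<omega> \<in> space M. X1 \<omega> \<in> B \<and> X2 \<omega> < a * X1 \<omega>}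
      = (\<integral>\<^sup>+p. f p * indicator S p \<partial>(lborel \<Otimes>\<^sub>M lborel))"
    using distributed_emeasure[OF D S] by simp
  also have "\<dots> = (\<integral>\<^sup>+x. \<integral>\<^sup>+y. f (x, y) * indicator S (x, y) \<partial>lborel \<partial>lborel)"
    by (intro lborel.nn_integral_fst[symmetric]) measurable
  also have "\<dots> = (\<integral>\<^sup>+x. (\<integral>\<^sup>+y. f (x, y) * indicator {..<a * x} y \<partial>lborel) * indicator B x \<partial>lborel)"
    by (intro nn_integral_cong) (auto simp: S_def indicator_def)
  finally show ?thesis .
qed

lemma distributed_uniform_measure_restrict:
  fixes X :: "'s \<Rightarrow> real" and g :: "real \<Rightarrow> ennreal"
  assumes A: "A \<in> sets M" and X: "X \<in> borel_measurable M" and g: "g \<in> borel_measurable lborel"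
    and restrict: "\<And>B. B \<in> sets borel \<Longrightarrow>
      emeasure M (X -` B \<inter> space M \<inter> A) = (\<integral>\<^sup>+x. g x * indicator B x \<partial>lborel)"
  shows "distributed (uniform_measure M A) lborel X (\<lambda>x. g x / emeasure M A)"
  unfolding distributed_def
proof (intro conjI)
  show "(\<lambda>x. g x / emeasure M A) \<in> borel_measurable lborel" using g by measurable
  show X': "X \<in> measurable (uniform_measure M A) lborel"
    using X by (simp add: measurable_cong_sets[OF sets_uniform_measure refl])
  show "distr (uniform_measure M A) lborel X = density lborel (\<lambda>x. g x / emeasure M A)"
  proof (rule measure_eqI)
    fix B assume "B \<in> sets (distr (uniform_measure M A) lborel X)"
    then have B: "B \<in> sets borel" by simp
    have "emeasure (distr (uniform_measure M A) lborel X) B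
        = emeasure M (X -` B \<inter> space M \<inter> A) / emeasure M A"
      using A B X' X by (simp add: emeasure_distr Int_commute)
    also have "\<dots> = (\<integral>\<^sup>+x. g x / emeasure M A * indicator B x \<partial>lborel)"
      using B g by (simp add: restrict nn_integral_divide[symmetric] ennreal_times_divide mult.commute)
    also have "\<dots> = emeasure (density lborel (\<lambda>x. g x / emeasure M A)) B"
      using B g by (simp add: emeasure_density)
    finally show "emeasure (distr (uniform_measure M A) lborel X) B
        = emeasure (density lborel (\<lambda>x. g x / emeasure M A)) B" .
  qed simp
qed

lemma abs_one_minus_two_exp_le:
  fixes t :: real
  assumes "0 \<le> t"
  shows "\<bar>1 - 2 * exp (- t)\<bar> \<le> 1"
  using assms exp_gt_zero[of "- t"] by (simp add: abs_le_iff)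

lemma fgm_factor_nonneg:
  fixes th s t :: real
  assumes "\<bar>th\<bar> \<le> 1" "0 \<le> s" "0 \<le> t"
  shows "0 \<le> 1 + th * (1 - 2 * exp (- s)) * (1 - 2 * exp (- t))"
proof -
  have "\<bar>th * (1 - 2 * exp (- s)) * (1 - 2 * exp (- t))\<bar> \<le> 1"
    using assms abs_one_minus_two_exp_le[of s] abs_one_minus_two_exp_le[of t]
    by (simp add: abs_mult mult_le_one)
  then show ?thesis by linarith
qed

text \<open>The density of X1 restricted to the event a X1 > X2, i.e. x \<mapsto> f(x) P(X2 < a x | X1 = x);
  it is the GWED density before normalisation.\<close>
definition gwed_subdensity :: "real \<Rightarrow> real \<Rightarrow> real \<Rightarrow> real \<Rightarrow> real \<Rightarrow> real" where
  "gwed_subdensity l1 l2 a th x =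
     (if x > 0 then
        l1 * exp (- l1 * x) * (1 - exp (- l2 * a * x))
          * (1 - th * exp (- l2 * a * x) * (1 - 2 * exp (- l1 * x)))
      else 0)"

lemma gwed_subdensity_pos:
  assumes "l1 > 0" "l2 > 0" "a > 0" "\<bar>th\<bar> \<le> 1" "x > 0"
  shows "0 < gwed_subdensity l1 l2 a th x"
proof -
  define e where "e = exp (- l2 * a * x)"
  define b where "b = 1 - 2 * exp (- l1 * x)"
  have e: "0 < e" "e < 1" using assms by (simp_all add: e_def)
  have thb: "\<bar>th * b\<bar> \<le> 1"
    using assms abs_one_minus_two_exp_le[of "l1 * x"] by (simp add: b_def abs_mult mult_le_one)
  have "\<bar>th * e * b\<bar> = e * \<bar>th * b\<bar>" using e by (simp add: abs_mult)
  also have "\<dots> \<le> e" using thb e by (simp add: mult_left_le)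
  also have "\<dots> < 1" by (fact e)
  finally have "0 < 1 - th * e * b" by linarith
  with e assms show ?thesis by (simp add: gwed_subdensity_def e_def b_def)
qed

lemma gwed_subdensity_nonneg:
  assumes "l1 > 0" "l2 > 0" "a > 0" "\<bar>th\<bar> \<le> 1"
  shows "0 \<le> gwed_subdensity l1 l2 a th x"
  using gwed_subdensity_pos[OF assms, of x] by (cases "x > 0") (auto simp: gwed_subdensity_def)

lemma gwed_pdf_eq_subdensity_div:
  "gwed_pdf l1 l2 a th x = gwed_subdensity l1 l2 a th x / gwed_prob l1 l2 a th"
  by (simp add: gwed_pdf_def gwed_subdensity_def)

lemma nn_integral_fgm_exp_pdf_lessThan:
  assumes "l1 > 0" "l2 > 0" "a > 0" "\<bar>th\<bar> \<le> 1"
  shows "(\<integral>\<^sup>+y. ennreal (fgm_exp_pdf l1 l2 th (x, y)) * indicator {..<a * x} y \<partial>lborel)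
     = ennreal (gwed_subdensity l1 l2 a th x)"
proof (cases "x > 0")
  case False
  then show ?thesis by (simp add: fgm_exp_pdf_def gwed_subdensity_def)
next
  case True
  define A where "A = l1 * exp (- l1 * x)"
  define B where "B = 1 - 2 * exp (- l1 * x)"
  define F where "F = (\<lambda>y. A * (1 + th * B * (1 - 2 * exp (- l2 * y))) * (l2 * exp (- l2 * y)))"
  define G where "G = (\<lambda>y. A * (- exp (- l2 * y) + th * B * (exp (- 2 * l2 * y) - exp (- l2 * y))))"
  have F_nonneg: "0 \<le> F y" if "0 \<le> y" for y
    using fgm_factor_nonneg[of th "l1 * x" "l2 * y"] assms True that
    by (simp add: F_def A_def B_def)
  have "DERIV G y :> F y" for y
    unfolding G_def F_def
    by (rule derivative_eq_intros refl | simp)+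
      (simp add: algebra_simps exp_diff[symmetric] exp_add[symmetric])
  then have "(\<integral>\<^sup>+y. ennreal (F y) * indicator {0..a * x} y \<partial>lborel) = ennreal (G (a * x) - G 0)"
    using F_nonneg True assms by (intro nn_integral_FTC_Icc) (auto simp: F_def)
  moreover have "(\<integral>\<^sup>+y. ennreal (fgm_exp_pdf l1 l2 th (x, y)) * indicator {..<a * x} y \<partial>lborel)
      = (\<integral>\<^sup>+y. ennreal (F y) * indicator {0..a * x} y \<partial>lborel)"
  proof (rule nn_integral_cong_AE)
    show "AE y in lborel. ennreal (fgm_exp_pdf l1 l2 th (x, y)) * indicator {..<a * x} y
        = ennreal (F y) * indicator {0..a * x} y"
      using AE_lborel_singleton[of 0] AE_lborel_singleton[of "a * x"]
      by eventually_elim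
        (use True in \<open>auto simp: fgm_exp_pdf_def F_def A_def B_def indicator_def mult_ac\<close>)
  qed
  moreover have "G (a * x) - G 0 = gwed_subdensity l1 l2 a th x"
    using True unfolding G_def gwed_subdensity_def A_def B_def
    by (simp add: algebra_simps exp_add[symmetric])
  ultimately show ?thesis by simp
qed

lemma nn_integral_gwed_subdensity:
  assumes "l1 > 0" "l2 > 0" "a > 0" "\<bar>th\<bar> \<le> 1"
  shows "(\<integral>\<^sup>+x. ennreal (gwed_subdensity l1 l2 a th x) \<partial>lborel) = ennreal (gwed_prob l1 l2 a th)"
proof -
  define c where "c = l2 * a"
  have "c > 0" using assms by (simp add: c_def)
  then have c: "c > 0" "l1 + c > 0" "l1 + 2 * c > 0" "2 * l1 + c > 0"
    using assms by simp_all
  define g where "g = (\<lambda>x. l1 * exp (- l1 * x) * (1 - exp (- c * x))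
          * (1 - th * exp (- c * x) * (1 - 2 * exp (- l1 * x))))"
  \<comment> \<open>Expanding g into a combination of exponentials exp (- k x) gives this antiderivative.\<close>
  define H where "H = (\<lambda>x. - exp (- l1 * x)
      + l1 * (1 + th) / (l1 + c) * exp (- (l1 + c) * x)
      - l1 * th / (l1 + 2 * c) * exp (- (l1 + 2 * c) * x)
      - 2 * l1 * th / (2 * l1 + c) * exp (- (2 * l1 + c) * x)
      + l1 * th / (l1 + c) * exp (- (2 * l1 + 2 * c) * x))"
  have g_nonneg: "0 \<le> g x" if "0 \<le> x" for x
    using that gwed_subdensity_pos[OF assms, of x]
    by (cases "x = 0") (auto simp: g_def c_def gwed_subdensity_def)
  have "DERIV H x :> g x" for x
  proof -
    have "exp (- (l1 + c) * x) = exp (- l1 * x) * exp (- c * x)"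
      "exp (- (l1 + 2 * c) * x) = exp (- l1 * x) * exp (- c * x) ^ 2"
      "exp (- (2 * l1 + c) * x) = exp (- l1 * x) ^ 2 * exp (- c * x)"
      "exp (- (2 * l1 + 2 * c) * x) = exp (- l1 * x) ^ 2 * exp (- c * x) ^ 2"
      by (simp_all add: exp_add[symmetric] exp_of_nat_mult[symmetric] algebra_simps)
    with c show ?thesis
      unfolding H_def g_def
      by (auto intro!: derivative_eq_intros)
        (simp_all add: divide_simps, simp add: algebra_simps power2_eq_square)
  qed
  moreover have "(H \<longlongrightarrow> 0) at_top"
  proof -
    have "(H \<longlongrightarrow> - 0 + l1 * (1 + th) / (l1 + c) * 0 - l1 * th / (l1 + 2 * c) * 0
        - 2 * l1 * th / (2 * l1 + c) * 0 + l1 * th / (l1 + c) * 0) at_top"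
      unfolding H_def using assms c
      by (intro tendsto_intros tendsto_exp_neg_mult_at_top) simp_all
    then show ?thesis by simp
  qed
  ultimately have "(\<integral>\<^sup>+x. ennreal (g x) * indicator {0..} x \<partial>lborel) = ennreal (0 - H 0)"
    using g_nonneg by (intro nn_integral_FTC_atLeast) (auto simp: g_def)
  moreover have "ennreal (gwed_subdensity l1 l2 a th x) = ennreal (g x) * indicator {0..} x" for x
    by (cases "x > 0") (auto simp: gwed_subdensity_def g_def c_def indicator_def mult_ac)
  moreover have "0 - H 0 = gwed_prob l1 l2 a th"
    unfolding H_def gwed_prob_def c_def using c
    by (simp add: divide_simps c_def) (simp add: algebra_simps)
  ultimately show ?thesis by simp
qed

lemma gwed_prob_pos:
  assumes "l1 > 0" "l2 > 0" "a > 0" "\<bar>th\<bar> \<le> 1"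
  shows "0 < gwed_prob l1 l2 a th"
proof -
  have "(\<integral>\<^sup>+x. ennreal (gwed_subdensity l1 l2 a th x) \<partial>lborel) \<noteq> 0"
  proof
    assume "(\<integral>\<^sup>+x. ennreal (gwed_subdensity l1 l2 a th x) \<partial>lborel) = 0"
    then have "AE x in lborel. ennreal (gwed_subdensity l1 l2 a th x) = 0"
      by (subst (asm) nn_integral_0_iff_AE) (auto simp: gwed_subdensity_def)
    then have "AE x in lborel. x \<notin> {0<..<1::real}"
      by eventually_elim (use gwed_subdensity_pos[OF assms] in force)
    then have "{0<..<1::real} \<in> null_sets lborel"
      by (subst AE_iff_null_sets) auto
    then have "emeasure lborel {0<..<1::real} = 0" by auto
    then show False by simp
  qed
  then show ?thesis
    using nn_integral_gwed_subdensity[OF assms] gwed_subdensity_nonneg[OF assms]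
    by (metis ennreal_eq_0_iff not_less)
qed

lemma emeasure_gwed_event:
  fixes X1 X2 :: "'s \<Rightarrow> real"
  assumes "l1 > 0" "l2 > 0" "a > 0" "\<bar>th\<bar> \<le> 1"
    and D: "distributed M (lborel \<Otimes>\<^sub>M lborel) (\<lambda>\<omega>. (X1 \<omega>, X2 \<omega>))
           (\<lambda>p. ennreal (fgm_exp_pdf l1 l2 th p))"
    and B: "B \<in> sets borel"
  shows "emeasure M {\<omega> \<in> space M. X1 \<omega> \<in> B \<and> X2 \<omega> < a * X1 \<omega>}
    = (\<integral>\<^sup>+x. ennreal (gwed_subdensity l1 l2 a th x) * indicator B x \<partial>lborel)"
  using emeasure_fst_in_below_line[OF D B]
  by (simp add: nn_integral_fgm_exp_pdf_lessThan[OF assms(1-4)])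

theorem mainTheorem2:
  fixes M :: "'s measure" and X1 X2 :: "'s \<Rightarrow> real"
    and l1 l2 a th :: real
  assumes "prob_space M"
    and "l1 > 0" and "l2 > 0" and "a > 0" and "-1 \<le> th" and "th \<le> 1"
    and "distributed M (lborel \<Otimes>\<^sub>M lborel) (\<lambda>\<omega>. (X1 \<omega>, X2 \<omega>))
           (\<lambda>p. ennreal (fgm_exp_pdf l1 l2 th p))"
  shows "measure M {\<omega> \<in> space M. a * X1 \<omega> > X2 \<omega>} = gwed_prob l1 l2 a th
    \<and> distributed (uniform_measure M {\<omega> \<in> space M. a * X1 \<omega> > X2 \<omega>}) lborel X1
        (\<lambda>x. ennreal (gwed_pdf l1 l2 a th x))"
proof -
  have params: "l1 > 0" "l2 > 0" "a > 0" "\<bar>th\<bar> \<le> 1" using assms(2-6) by auto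
  note D = assms(7)
  define A where "A = {\<omega> \<in> space M. a * X1 \<omega> > X2 \<omega>}"
  have [measurable]: "X1 \<in> borel_measurable M" "X2 \<in> borel_measurable M"
    using distributed_measurable[OF D] by (simp_all add: measurable_pair_iff o_def)
  have A_sets: "A \<in> sets M" unfolding A_def by measurable
  have restrict: "emeasure M (X1 -` B \<inter> space M \<inter> A)
      = (\<integral>\<^sup>+x. ennreal (gwed_subdensity l1 l2 a th x) * indicator B x \<partial>lborel)"
    if "B \<in> sets borel" for B
  proof -
    have "X1 -` B \<inter> space M \<inter> A = {\<omega> \<in> space M. X1 \<omega> \<in> B \<and> X2 \<omega> < a * X1 \<omega>}"
      by (auto simp: A_def)
    with emeasure_gwed_event[OF params D that] show ?thesis by simp
  qed
  have emeasure_A: "emeasure M A = ennreal (gwed_prob l1 l2 a th)"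
    using restrict[of UNIV] nn_integral_gwed_subdensity[OF params] sets.sets_into_space[OF A_sets]
    by (simp add: Int_absorb1)
  have "(\<lambda>x. ennreal (gwed_pdf l1 l2 a th x))
      = (\<lambda>x. ennreal (gwed_subdensity l1 l2 a th x) / emeasure M A)"
    using gwed_prob_pos[OF params] gwed_subdensity_nonneg[OF params]
    by (simp add: emeasure_A gwed_pdf_eq_subdensity_div divide_ennreal)
  moreover have "measure M A = gwed_prob l1 l2 a th"
    using emeasure_A gwed_prob_pos[OF params] by (simp add: measure_def)
  moreover have "distributed (uniform_measure M A) lborel X1
      (\<lambda>x. ennreal (gwed_subdensity l1 l2 a th x) / emeasure M A)"
    by (rule distributed_uniform_measure_restrict[OF A_sets _ _ restrict])
      (measurable, simp add: gwed_subdensity_def)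
  ultimately show ?thesis unfolding A_def by simp
qed

end
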